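(* Let $X=(X_1,X_2)$ be an absolutely continuous nonnegative bivariate random vector with differentiable joint distribution function $F$ and finite $\overline\varepsilon^*_i(X;t_1,t_2)$. Fix $i\in\{1,2\}$. If $m_i^X(t_1,t_2)$ is increasing in $t_i$ for $t_1,t_2>0$, then $\overline\varepsilon^*_i(X;t_1,t_2)$ is also increasing in $t_i$.
   Context: Let $F(x_1,x_2)=P(X_1\le x_1,X_2\le x_2)$. For $t_1,t_2>0$ with $F(t_1,t_2)>0$ define the conditional dynamic cumulative past entropies (CDCPE) $$\overline\varepsilon^*_1(X;t_1,t_2)=-\int_0^{t_1}\frac{F(x_1,t_2)}{F(t_1,t_2)}\log\frac{F(x_1,t_2)}{F(t_1,t_2)}dx_1,\qquad \overline\varepsilon^*_2(X;t_1,t_2)=-\int_0^{t_2}\frac{F(t_1,x_2)}{F(t_1,t_2)}\log\frac{F(t_1,x_2)}{F(t_1,t_2)}dx_2.$$ The components of the bivariate expected inactivity time (EIT) are $m_1^X(t_1,t_2)=\frac{1}{F(t_1,t_2)}\int_0^{t_1}F(x_1,t_2)dx_1$ and $m_2^X(t_1,t_2)=\frac{1}{F(t_1,t_2)}\int_0^{t_2}F(t_1,x_2)dx_2$. *)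

theory Defs
  imports "HOL-Probability.Probability"
begin

definition joint_cdf :: "'a measure \<Rightarrow> ('a \<Rightarrow> real) \<Rightarrow> ('a \<Rightarrow> real) \<Rightarrow> real \<Rightarrow> real \<Rightarrow> real" where
  "joint_cdf M X1 X2 x1 x2 = measure M {\<omega> \<in> space M. X1 \<omega> \<le> x1 \<and> X2 \<omega> \<le> x2}"

definition sec :: "(real \<Rightarrow> real \<Rightarrow> real) \<Rightarrow> nat \<Rightarrow> real \<Rightarrow> real \<Rightarrow> real \<Rightarrow> real" where
  "sec F i t1 t2 x = (if i = 1 then F x t2 else F t1 x)"

definition coord :: "nat \<Rightarrow> real \<Rightarrow> real \<Rightarrow> real" where
  "coord i t1 t2 = (if i = 1 then t1 else t2)"

text \<open>Integrand of the CDCPE (log is the natural logarithm; 0 log 0 = 0 since ln 0 = 0).\<close>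
definition cdcpe_integrand :: "(real \<Rightarrow> real \<Rightarrow> real) \<Rightarrow> nat \<Rightarrow> real \<Rightarrow> real \<Rightarrow> real \<Rightarrow> real" where
  "cdcpe_integrand F i t1 t2 x = sec F i t1 t2 x / F t1 t2 * ln (sec F i t1 t2 x / F t1 t2)"

definition cdcpe :: "(real \<Rightarrow> real \<Rightarrow> real) \<Rightarrow> nat \<Rightarrow> real \<Rightarrow> real \<Rightarrow> real" where
  "cdcpe F i t1 t2 = - integral {0..coord i t1 t2} (cdcpe_integrand F i t1 t2)"

definition eit :: "(real \<Rightarrow> real \<Rightarrow> real) \<Rightarrow> nat \<Rightarrow> real \<Rightarrow> real \<Rightarrow> real" where
  "eit F i t1 t2 = integral {0..coord i t1 t2} (sec F i t1 t2) / F t1 t2"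

definition upd_coord :: "nat \<Rightarrow> real \<Rightarrow> real \<Rightarrow> real \<Rightarrow> real \<times> real" where
  "upd_coord i t1 t2 s = (if i = 1 then (s, t2) else (t1, s))"

definition incr_in :: "(real \<Rightarrow> real \<Rightarrow> real) \<Rightarrow> nat \<Rightarrow> (real \<Rightarrow> real \<Rightarrow> real) \<Rightarrow> bool" where
  "incr_in F i g \<longleftrightarrow> (\<forall>t1 t2 s. 0 < t1 \<and> 0 < t2 \<and> F t1 t2 > 0 \<and> coord i t1 t2 \<le> s \<longrightarrow>
      g t1 t2 \<le> case_prod g (upd_coord i t1 t2 s))"

end

theory Submission
  imports Defs
begin

text \<open>Fixing the other coordinate, the section G of F along coordinate i is a univariate
  distribution function; the CDCPE is E(t) = -int_0^t (G/G t) ln (G/G t) and the EIT is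
  m = A/G with A(t) = int_0^t G. With B(t) = int_0^t G ln G one has E = (A ln G - B)/G, and
  differentiating gives E' = G' K / G^2 for K = A - A ln G + B. Since K' = G m' \<ge> 0, K is
  nondecreasing on the support (a, \<infinity>) of G, and K(v) \<ge> a - v there because A \<ge> 0,
  ln G \<le> 0 and G ln G \<ge> -1. Hence K \<ge> 0, so E' \<ge> 0.\<close>

definition cum_past_entropy :: "(real \<Rightarrow> real) \<Rightarrow> real \<Rightarrow> real" where
  "cum_past_entropy G t = - integral {0..t} (\<lambda>x. G x / G t * ln (G x / G t))"

definition mean_inactivity_time :: "(real \<Rightarrow> real) \<Rightarrow> real \<Rightarrow> real" where
  "mean_inactivity_time G t = integral {0..t} G / G t"

lemma has_real_derivative_nonneg_if_right_mono:
  fixes f :: "real \<Rightarrow> real"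
  assumes "(f has_real_derivative l) (at x)" and "\<And>h. 0 < h \<Longrightarrow> f x \<le> f (x + h)"
  shows "0 \<le> l"
proof (rule ccontr)
  assume "\<not> 0 \<le> l"
  then obtain d where "d > 0" "\<And>h. 0 < h \<Longrightarrow> h < d \<Longrightarrow> f (x + h) < f x"
    using DERIV_neg_dec_right[OF assms(1)] by force
  then have "f (x + d / 2) < f x" by simp
  then show False using assms(2)[of "d / 2"] \<open>d > 0\<close> by simp
qed

lemma x_ln_x_ge_minus_one:
  fixes y :: real
  assumes "0 \<le> y" "y \<le> 1"
  shows "-1 \<le> y * ln y"
proof (cases "y = 0")
  case False
  then have "y * ln (1 / y) \<le> y * (1 / y - 1)"
    using assms by (intro mult_left_mono ln_le_minus_one) auto
  then show ?thesis using assms False by (simp add: ln_div algebra_simps)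
qed simp

lemma x_ln_x_div:
  fixes y c :: real
  assumes "0 \<le> y" "0 < c"
  shows "y / c * ln (y / c) = (y * ln y - ln c * y) / c"
  using assms by (cases "y = 0") (auto simp: ln_div field_simps)

lemma nonneg_if_mono_above_linear_bound:
  fixes K :: "real \<Rightarrow> real"
  assumes mono: "\<And>u v. a < v \<Longrightarrow> v \<le> u \<Longrightarrow> K v \<le> K u"
    and bound: "\<And>v. a < v \<Longrightarrow> a - v \<le> K v"
    and "a < u"
  shows "0 \<le> K u"
proof (rule ccontr)
  assume neg: "\<not> 0 \<le> K u"
  define v where "v = min u (a - K u / 2)"
  have "a < v" "v \<le> u" using \<open>a < u\<close> neg by (auto simp: v_def)
  then have "a - v \<le> K u" using mono bound by (meson order_trans)
  moreover have "v - a \<le> - K u / 2" by (simp add: v_def)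
  ultimately show False using neg by linarith
qed

lemma integral_has_real_derivative_at:
  fixes f :: "real \<Rightarrow> real"
  assumes "f integrable_on {a..b}" "a < x" "x < b" "isCont f x"
  shows "((\<lambda>u. integral {a..u} f) has_real_derivative f x) (at x)"
proof -
  have at_x: "at x within {a..b} = at x" using assms(2,3) by (intro at_within_Icc_at) auto
  have "((\<lambda>u. integral {a..u} f) has_vector_derivative f x) (at x within ({a..b} - {}))"
    using assms by (intro integral_has_vector_derivative_continuous_at)
      (auto simp: at_x intro: continuous_at_imp_continuous_within)
  then show ?thesis using at_x by (simp add: has_real_derivative_iff_has_vector_derivative)
qed

locale smooth_cdf =
  fixes G :: "real \<Rightarrow> real"
  assumes nonneg: "0 \<le> G x" and le_one: "G x \<le> 1" and mono: "mono G"
    and differentiable: "0 < x \<Longrightarrow> G differentiable (at x)"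
    and cpe_integrable: "0 < t \<Longrightarrow> 0 < G t \<Longrightarrow>
      (\<lambda>x. G x / G t * ln (G x / G t)) integrable_on {0..t}"
begin

lemma integrable: "G integrable_on {a..b}"
  by (rule integrable_on_mono_on) (use mono in \<open>auto simp: mono_on_def mono_def\<close>)

lemma isCont: "0 < x \<Longrightarrow> isCont G x"
  by (rule differentiable_imp_continuous_within[OF differentiable])

lemma deriv_nonneg: "(G has_real_derivative g) (at x) \<Longrightarrow> 0 \<le> g"
  by (rule has_real_derivative_nonneg_if_right_mono) (auto intro: monoD[OF mono])

lemma support_left_endpoint:
  assumes "0 < t" "0 < G t"
  obtains a where "0 \<le> a" "a < t" "\<And>y. 0 \<le> y \<Longrightarrow> y < a \<Longrightarrow> G y = 0"
    "\<And>x. a < x \<Longrightarrow> 0 < G x"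
proof -
  define S where "S = {x. 0 < x \<and> 0 < G x}"
  have bdd: "bdd_below S" unfolding S_def by (rule bdd_belowI[of _ 0]) auto
  have "(G \<longlongrightarrow> G t) (at_left t)"
    using isCont[OF assms(1)] unfolding isCont_def filterlim_at_split by blast
  then have "\<forall>\<^sub>F y in at_left t. 0 < G y" using assms(2) by (rule order_tendstoD)
  moreover have "\<forall>\<^sub>F y in at_left t. y \<in> {0<..<t}" using assms(1) by (rule eventually_at_left_real)
  ultimately have "\<forall>\<^sub>F y in at_left t. y \<in> S \<and> y < t" by eventually_elim (auto simp: S_def)
  then obtain y where y: "y \<in> S" "y < t"
    using eventually_happens'[OF trivial_limit_at_left_real] by blast
  show ?thesis
  proof (rule that[of "Inf S"])
    show "Inf S < t" using cInf_lower[OF y(1) bdd] y(2) by linarith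
    show "0 \<le> Inf S" using y by (intro cInf_greatest) (auto simp: S_def)
    show "0 < G x" if x: "Inf S < x" for x
    proof -
      obtain z where "z \<in> S" "z < x" using cInf_lessD[OF _ x] y by blast
      then show ?thesis using monoD[OF mono, of z x] by (simp add: S_def)
    qed
    show "G y = 0" if "0 \<le> y" "y < Inf S" for y
    proof -
      define z where "z = (y + Inf S) / 2"
      have "0 < z" "z < Inf S" using that by (simp_all add: z_def)
      then have "z \<notin> S" using bdd by (meson cInf_lower not_le)
      then have "G z \<le> 0" using \<open>0 < z\<close> by (simp add: S_def)
      moreover have "G y \<le> G z" using that by (intro monoD[OF mono]) (simp add: z_def)
      ultimately show ?thesis using nonneg[of y] by simp
    qed
  qed
qed

lemma x_ln_x_integrable:
  assumes "0 < t" "0 < G t"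
  shows "(\<lambda>x. G x * ln (G x)) integrable_on {0..t}"
proof -
  have "(\<lambda>x. G t * (G x / G t * ln (G x / G t)) + ln (G t) * G x) integrable_on {0..t}"
    using assms by (intro integrable_add integrable_on_mult_right cpe_integrable integrable)
  then show ?thesis using assms by (simp only: x_ln_x_div[OF nonneg assms(2)]) simp
qed

lemma cum_past_entropy_eq:
  assumes "0 < t" "0 < G t"
  shows "cum_past_entropy G t =
    (integral {0..t} G * ln (G t) - integral {0..t} (\<lambda>x. G x * ln (G x))) / G t"
proof -
  have "integral {0..t} (\<lambda>x. G x / G t * ln (G x / G t)) =
      integral {0..t} (\<lambda>x. G x * ln (G x) - ln (G t) * G x) / G t"
    by (simp only: x_ln_x_div[OF nonneg assms(2)] integral_divide)
  also have "\<dots> = (integral {0..t} (\<lambda>x. G x * ln (G x)) - ln (G t) * integral {0..t} G) / G t"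
    using integral_diff[OF x_ln_x_integrable[OF assms] integrable_on_mult_right[OF integrable]]
    by simp
  finally have eq: "integral {0..t} (\<lambda>x. G x / G t * ln (G x / G t)) =
    (integral {0..t} (\<lambda>x. G x * ln (G x)) - ln (G t) * integral {0..t} G) / G t" .
  show ?thesis
    unfolding cum_past_entropy_def eq by (simp only: minus_divide_left minus_diff_eq mult.commute)
qed

lemma has_real_derivative_integral:
  "0 < x \<Longrightarrow> ((\<lambda>u. integral {0..u} G) has_real_derivative G x) (at x)"
  by (rule integral_has_real_derivative_at[OF integrable, of 0 x "x + 1"]) (auto intro: isCont)

lemma has_real_derivative_integral_x_ln_x:
  assumes "0 < x" "0 < G x"
  shows "((\<lambda>u. integral {0..u} (\<lambda>y. G y * ln (G y))) has_real_derivative G x * ln (G x)) (at x)"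
proof (rule integral_has_real_derivative_at)
  have "G x \<le> G (x + 1)" by (rule monoD[OF mono]) simp
  then show "(\<lambda>y. G y * ln (G y)) integrable_on {0..x + 1}"
    using assms by (intro x_ln_x_integrable) auto
  show "isCont (\<lambda>y. G y * ln (G y)) x"
    using assms isCont by (intro continuous_intros) auto
qed (use assms in auto)

lemma integral_x_ln_x_ge:
  assumes "0 \<le> a" "a < v" "0 < G v" and zero: "\<And>y. 0 \<le> y \<Longrightarrow> y < a \<Longrightarrow> G y = 0"
  shows "a - v \<le> integral {0..v} (\<lambda>y. G y * ln (G y))"
proof -
  have "((\<lambda>y. -1 :: real) has_integral a - v) {a..v}"
    using has_integral_const_real[of "-1 :: real" a v] \<open>a < v\<close> by simp
  then have "((\<lambda>y. if y \<in> {a..v} then -1 else 0) has_integral a - v) {0..v}"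
    using assms by (subst has_integral_restrict) auto
  moreover have "(\<lambda>y. if y \<in> {a..v} then -1 else 0) y \<le> G y * ln (G y)" if "y \<in> {0..v}" for y
    using that zero[of y] x_ln_x_ge_minus_one[OF nonneg le_one] by auto
  ultimately show ?thesis
    using assms x_ln_x_integrable[of v] by (auto intro: has_integral_le[OF _ integrable_integral])
qed

lemma deriv_le_if_mean_inactivity_time_mono:
  assumes mit: "\<And>s. x \<le> s \<Longrightarrow> mean_inactivity_time G x \<le> mean_inactivity_time G s"
    and "0 < x" "0 < G x" and "(G has_real_derivative g) (at x)"
  shows "integral {0..x} G * g \<le> G x ^ 2"
proof -
  have "((\<lambda>y. integral {0..y} G / G y) has_real_derivative
      (G x * G x - integral {0..x} G * g) / (G x * G x)) (at x)"
    using assms has_real_derivative_integral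
    by (auto intro!: derivative_eq_intros simp: field_simps)
  then have "0 \<le> (G x * G x - integral {0..x} G * g) / (G x * G x)"
    by (rule has_real_derivative_nonneg_if_right_mono)
      (use mit in \<open>simp add: mean_inactivity_time_def\<close>)
  then show ?thesis using mult_pos_pos[OF assms(3) assms(3)]
    by (simp add: zero_le_divide_iff power2_eq_square)
qed

theorem cum_past_entropy_mono:
  assumes mit: "\<And>t s. 0 < t \<Longrightarrow> 0 < G t \<Longrightarrow> t \<le> s \<Longrightarrow>
      mean_inactivity_time G t \<le> mean_inactivity_time G s"
    and "0 < t" "0 < G t" "t \<le> s"
  shows "cum_past_entropy G t \<le> cum_past_entropy G s"
proof -
  obtain a where a: "0 \<le> a" "a < t" "\<And>y. 0 \<le> y \<Longrightarrow> y < a \<Longrightarrow> G y = 0"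
    and pos: "\<And>x. a < x \<Longrightarrow> 0 < G x"
    using support_left_endpoint[OF assms(2,3)] by blast
  define A where "A x = integral {0..x} G" for x
  define B where "B x = integral {0..x} (\<lambda>y. G y * ln (G y))" for x
  define K where "K x = A x - A x * ln (G x) + B x" for x
  define E where "E x = (A x * ln (G x) - B x) / G x" for x
  have derivs: "(A has_real_derivative G x) (at x)" "(B has_real_derivative G x * ln (G x)) (at x)"
    and G_deriv: "\<exists>g. (G has_real_derivative g) (at x)" if "a < x" for x
    using that a pos[OF that] differentiable[of x]
    by (auto simp: A_def[abs_def] B_def[abs_def] real_differentiable_def
        intro!: has_real_derivative_integral has_real_derivative_integral_x_ln_x)
  have K_mono: "K v \<le> K u" if "a < v" "v \<le> u" for u v
  proof (rule DERIV_nonneg_imp_nondecreasing[OF \<open>v \<le> u\<close>])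
    fix x assume "v \<le> x" "x \<le> u"
    then have x: "a < x" "0 < x" "0 < G x" using that a pos[of x] by auto
    then obtain g where g: "(G has_real_derivative g) (at x)" using G_deriv by blast
    have "(K has_real_derivative (G x ^ 2 - A x * g) / G x) (at x)"
      unfolding K_def[abs_def] using x g derivs[OF x(1)]
      by (auto intro!: derivative_eq_intros simp: field_simps power2_eq_square)
    moreover have "A x * g \<le> G x ^ 2"
      unfolding A_def using x g mit by (intro deriv_le_if_mean_inactivity_time_mono) auto
    ultimately show "\<exists>k. (K has_real_derivative k) (at x) \<and> 0 \<le> k" using x by auto
  qed
  have K_nonneg: "0 \<le> K u" if "a < u" for u
  proof (rule nonneg_if_mono_above_linear_bound[OF K_mono _ that])
    fix v assume "a < v"
    have "0 \<le> A v" unfolding A_def using nonneg by (intro integral_nonneg integrable) auto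
    moreover have "ln (G v) \<le> 0" using pos[OF \<open>a < v\<close>] le_one[of v] by simp
    moreover have "a - v \<le> B v"
      unfolding B_def using a \<open>a < v\<close> pos by (intro integral_x_ln_x_ge) auto
    ultimately show "a - v \<le> K v"
      unfolding K_def using mult_nonneg_nonpos[of "A v" "ln (G v)"] by linarith
  qed
  have "E t \<le> E s"
  proof (rule DERIV_nonneg_imp_nondecreasing[OF \<open>t \<le> s\<close>])
    fix x assume "t \<le> x" "x \<le> s"
    then have x: "a < x" "0 < G x" using a pos[of x] by auto
    then obtain g where g: "(G has_real_derivative g) (at x)" using G_deriv by blast
    have "(E has_real_derivative g * K x / G x ^ 2) (at x)"
      unfolding E_def[abs_def] K_def using x g derivs[OF x(1)]
      by (auto intro!: derivative_eq_intros simp: field_simps power2_eq_square)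
    moreover have "0 \<le> g * K x / G x ^ 2"
      using deriv_nonneg[OF g] K_nonneg[OF x(1)] by simp
    ultimately show "\<exists>e. (E has_real_derivative e) (at x) \<and> 0 \<le> e" by blast
  qed
  moreover have "0 < s" "0 < G s" using pos a assms(2,4) by auto
  ultimately show ?thesis
    using assms(2,3) by (simp add: cum_past_entropy_eq E_def A_def B_def)
qed

end

lemma sec_coord: "sec F i t1 t2 (coord i t1 t2) = F t1 t2"
  by (simp add: sec_def coord_def)

lemma cdcpe_eq_cum_past_entropy:
  "cdcpe F i = (\<lambda>t1 t2. cum_past_entropy (sec F i t1 t2) (coord i t1 t2))"
  by (simp add: fun_eq_iff cdcpe_def cdcpe_integrand_def[abs_def] cum_past_entropy_def sec_coord)

lemma eit_eq_mean_inactivity_time: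
  "eit F i = (\<lambda>t1 t2. mean_inactivity_time (sec F i t1 t2) (coord i t1 t2))"
  by (simp add: fun_eq_iff eit_def mean_inactivity_time_def sec_coord)

lemma incr_in_sec_iff:
  "incr_in F i (\<lambda>t1 t2. h (sec F i t1 t2) (coord i t1 t2)) \<longleftrightarrow>
    (\<forall>t1 t2 t s. 0 < t1 \<and> 0 < t2 \<and> 0 < t \<and> 0 < sec F i t1 t2 t \<and> t \<le> s \<longrightarrow>
      h (sec F i t1 t2) t \<le> h (sec F i t1 t2) s)"
  by (cases "i = 1") (auto simp: incr_in_def upd_coord_def coord_def sec_def[abs_def])

lemma joint_cdf_mono:
  assumes "finite_measure M" "X1 \<in> borel_measurable M" "X2 \<in> borel_measurable M"
    and "x \<le> x'" "y \<le> y'"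
  shows "joint_cdf M X1 X2 x y \<le> joint_cdf M X1 X2 x' y'"
  unfolding joint_cdf_def using assms
  by (intro finite_measure.finite_measure_mono) (auto, measurable)

lemma sec_differentiable:
  assumes "\<forall>p. 0 < fst p \<and> 0 < snd p \<longrightarrow> (\<lambda>q. F (fst q) (snd q)) differentiable (at p)"
    and "0 < t1" "0 < t2" "0 < x"
  shows "sec F i t1 t2 differentiable (at x)"
proof -
  have "sec F i t1 t2 = (\<lambda>q. F (fst q) (snd q)) \<circ> upd_coord i t1 t2"
    by (simp add: fun_eq_iff sec_def upd_coord_def)
  moreover have "upd_coord i t1 t2 differentiable (at x)"
    unfolding upd_coord_def[abs_def] by (cases "i = 1") (auto intro!: derivative_intros)
  ultimately show ?thesis
    using assms by (auto intro!: differentiable_chain_at simp: upd_coord_def)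
qed

lemma smooth_cdf_sec:
  assumes "prob_space M" "X1 \<in> borel_measurable M" "X2 \<in> borel_measurable M"
    and "\<forall>p. 0 < fst p \<and> 0 < snd p \<longrightarrow>
      (\<lambda>q. joint_cdf M X1 X2 (fst q) (snd q)) differentiable (at p)"
    and "\<forall>t1 t2. 0 < t1 \<and> 0 < t2 \<and> joint_cdf M X1 X2 t1 t2 > 0 \<longrightarrow>
      cdcpe_integrand (joint_cdf M X1 X2) i t1 t2 integrable_on {0..coord i t1 t2}"
    and "0 < t1" "0 < t2"
  shows "smooth_cdf (sec (joint_cdf M X1 X2) i t1 t2)"
proof
  interpret prob_space M by fact
  show "0 \<le> sec (joint_cdf M X1 X2) i t1 t2 x" "sec (joint_cdf M X1 X2) i t1 t2 x \<le> 1" for x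
    by (simp_all add: sec_def joint_cdf_def)
  show "mono (sec (joint_cdf M X1 X2) i t1 t2)"
    using assms(2,3) by (auto simp: mono_def sec_def intro: joint_cdf_mono finite_measure_axioms)
  show "sec (joint_cdf M X1 X2) i t1 t2 differentiable (at x)" if "0 < x" for x
    using assms(4,6,7) that by (rule sec_differentiable)
  show "(\<lambda>x. sec (joint_cdf M X1 X2) i t1 t2 x / sec (joint_cdf M X1 X2) i t1 t2 t *
      ln (sec (joint_cdf M X1 X2) i t1 t2 x / sec (joint_cdf M X1 X2) i t1 t2 t)) integrable_on {0..t}"
    if "0 < t" "0 < sec (joint_cdf M X1 X2) i t1 t2 t" for t
    using assms(5,6,7) that
    by (cases "i = 1") (auto simp: cdcpe_integrand_def[abs_def] sec_def coord_def)
qed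

theorem mainTheorem7:
  fixes M :: "'a measure" and X1 X2 :: "'a \<Rightarrow> real" and i :: nat
  assumes "prob_space M"
    and "X1 \<in> borel_measurable M" and "X2 \<in> borel_measurable M"
    and "absolutely_continuous lborel (distr M (lborel :: (real \<times> real) measure) (\<lambda>\<omega>. (X1 \<omega>, X2 \<omega>)))"
    and "AE \<omega> in M. 0 \<le> X1 \<omega> \<and> 0 \<le> X2 \<omega>"
    and "\<forall>p. 0 < fst p \<and> 0 < snd p \<longrightarrow>
           (\<lambda>q. joint_cdf M X1 X2 (fst q) (snd q)) differentiable (at p)"
    and "i \<in> {1, 2}"
    and "\<forall>t1 t2. 0 < t1 \<and> 0 < t2 \<and> joint_cdf M X1 X2 t1 t2 > 0 \<longrightarrow>
           cdcpe_integrand (joint_cdf M X1 X2) i t1 t2 integrable_on {0..coord i t1 t2}"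
    and "incr_in (joint_cdf M X1 X2) i (eit (joint_cdf M X1 X2) i)"
  shows "incr_in (joint_cdf M X1 X2) i (cdcpe (joint_cdf M X1 X2) i)"
proof -
  \<comment> \<open>The argument is the same for every i.\<close>
  let ?G = "sec (joint_cdf M X1 X2) i"
  have cdf: "smooth_cdf (?G t1 t2)" if "0 < t1" "0 < t2" for t1 t2
    using assms(1-3,6,8) that by (rule smooth_cdf_sec)
  have mit: "\<forall>t1 t2 t s. 0 < t1 \<and> 0 < t2 \<and> 0 < t \<and> 0 < ?G t1 t2 t \<and> t \<le> s \<longrightarrow>
      mean_inactivity_time (?G t1 t2) t \<le> mean_inactivity_time (?G t1 t2) s"
    using assms(9) unfolding eit_eq_mean_inactivity_time incr_in_sec_iff .
  show ?thesis
    unfolding cdcpe_eq_cum_past_entropy incr_in_sec_iff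
    using smooth_cdf.cum_past_entropy_mono[OF cdf] mit by blast
qed

end
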